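(* Let $\mathcal{C}\subset\mathbb{R}^N$ be a convex set, $p\in\mathcal{C}$ and $u\in\mathbb{R}^N$. Then the map $r\mapsto\|u\|_{\mathcal{C}}(p;r)$, $r>0$, is non-increasing, and $\limsup_{r\searrow0}\|u\|_{\mathcal{C}}(p;r)\le\|u\|$.
   Context: Local norm: for $p\in\mathcal{C}$, a vector $u$ and $r>0$, $\|u\|_{\mathcal{C}}(p;r)=\sup_{v\in\mathcal{C},\,\|v-p\|=r}\max\big(\langle u,v-p\rangle/r,\,0\big)$ if there exists $v\in\mathcal{C}$ with $\|v-p\|=r$, and $0$ otherwise. $\|\cdot\|$ is the Euclidean norm. *)

theory Defs
  imports "HOL-Analysis.Analysis"
begin

definition local_norm :: "'a::euclidean_space set \<Rightarrow> 'a \<Rightarrow> 'a \<Rightarrow> real \<Rightarrow> real" where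
  "local_norm C u p r =
     (if \<exists>v\<in>C. norm (v - p) = r
      then (SUP v\<in>{v\<in>C. norm (v - p) = r}. max (inner u (v - p) / r) 0)
      else 0)"

end

theory Submission
  imports Defs
begin

text \<open>Shrinking a point v of C at distance s from p radially towards p gives, by convexity,
  a point of C at any smaller distance r with the same difference quotient
  \<open>\<langle>u, v - p\<rangle> / \<parallel>v - p\<parallel>\<close>; hence every value in the supremum defining the local norm at
  radius s also occurs at radius r, which gives monotonicity. The bound by \<open>\<parallel>u\<parallel>\<close> is
  Cauchy-Schwarz, uniformly in r, so it survives the upper limit.\<close>

lemma local_norm_term_le_norm:
  fixes u v p :: "'a::euclidean_space"
  assumes "norm (v - p) = r"
  shows "max (inner u (v - p) / r) 0 \<le> norm u"
proof (cases "r = 0")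
  case False
  with assms have r: "r > 0" by (metis norm_ge_zero less_eq_real_def)
  have "inner u (v - p) \<le> norm u * r"
    using Cauchy_Schwarz_ineq2[of u "v - p"] assms by simp
  with r show ?thesis by (simp add: divide_le_eq)
qed simp

lemma bdd_above_local_norm_terms:
  fixes u p :: "'a::euclidean_space"
  shows "bdd_above ((\<lambda>v. max (inner u (v - p) / r) 0) ` {v\<in>C. norm (v - p) = r})"
  using local_norm_term_le_norm by (intro bdd_aboveI[where M = "norm u"]) blast

lemma local_norm_term_le:
  fixes u p v :: "'a::euclidean_space"
  assumes "v \<in> C" and "norm (v - p) = r"
  shows "max (inner u (v - p) / r) 0 \<le> local_norm C u p r"
proof -
  have "max (inner u (v - p) / r) 0
        \<le> (SUP v\<in>{v\<in>C. norm (v - p) = r}. max (inner u (v - p) / r) 0)"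
    by (rule cSUP_upper[OF _ bdd_above_local_norm_terms]) (use assms in auto)
  with assms show ?thesis unfolding local_norm_def by auto
qed

lemma local_norm_nonneg: "local_norm C u p r \<ge> 0"
proof (cases "\<exists>v\<in>C. norm (v - p) = r")
  case True
  then obtain v where "v \<in> C" "norm (v - p) = r" by blast
  then show ?thesis using local_norm_term_le[of v C p r u] by linarith
qed (simp add: local_norm_def)

lemma local_norm_le_norm:
  fixes u p :: "'a::euclidean_space"
  shows "local_norm C u p r \<le> norm u"
proof -
  have "(SUP v\<in>{v\<in>C. norm (v - p) = r}. max (inner u (v - p) / r) 0) \<le> norm u"
    if "\<exists>v\<in>C. norm (v - p) = r"
    using that local_norm_term_le_norm by (intro cSUP_least) auto
  then show ?thesis unfolding local_norm_def by simp
qed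

lemma convex_radial_shrink:
  fixes u p v :: "'a::euclidean_space"
  assumes "convex C" "p \<in> C" "v \<in> C" "norm (v - p) = s" "0 < r" "r \<le> s"
  obtains w where "w \<in> C" "norm (w - p) = r" "inner u (w - p) / r = inner u (v - p) / s"
proof
  define w where "w = p + (r / s) *\<^sub>R (v - p)"
  have s: "s > 0" using assms by simp
  have "w = (1 - r / s) *\<^sub>R p + (r / s) *\<^sub>R v"
    unfolding w_def by (simp add: algebra_simps)
  moreover have "0 \<le> r / s" "r / s \<le> 1" using assms s by auto
  ultimately show "w \<in> C"
    using convexD_alt[OF assms(1-3)] by (metis add.commute)
  show "norm (w - p) = r" using assms s unfolding w_def by simp
  show "inner u (w - p) / r = inner u (v - p) / s"
    using assms s unfolding w_def by simp
qed

lemma local_norm_antimono: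
  fixes u p :: "'a::euclidean_space"
  assumes "convex C" "p \<in> C" "0 < r" "r \<le> s"
  shows "local_norm C u p s \<le> local_norm C u p r"
proof (cases "\<exists>v\<in>C. norm (v - p) = s")
  case True
  have "(SUP v\<in>{v\<in>C. norm (v - p) = s}. max (inner u (v - p) / s) 0) \<le> local_norm C u p r"
  proof (rule cSUP_least)
    show "{v\<in>C. norm (v - p) = s} \<noteq> {}" using True by blast
  next
    fix v assume "v \<in> {v\<in>C. norm (v - p) = s}"
    then obtain w where "w \<in> C" "norm (w - p) = r" "inner u (w - p) / r = inner u (v - p) / s"
      using convex_radial_shrink[OF assms(1,2) _ _ assms(3,4)] by blast
    then show "max (inner u (v - p) / s) 0 \<le> local_norm C u p r"
      using local_norm_term_le[of w C p r u] by simp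
  qed
  with True show ?thesis unfolding local_norm_def by simp
next
  case False
  then have "local_norm C u p s = 0" unfolding local_norm_def by simp
  with local_norm_nonneg show ?thesis by metis
qed

theorem lemma2p4:
  fixes C :: "'a::euclidean_space set" and p u :: 'a
  assumes "convex C" and "p \<in> C"
  shows "(\<forall>r s. 0 < r \<longrightarrow> r \<le> s \<longrightarrow> local_norm C u p s \<le> local_norm C u p r)
         \<and> Limsup (at_right 0) (\<lambda>r. ereal (local_norm C u p r)) \<le> ereal (norm u)"
proof
  show "\<forall>r s. 0 < r \<longrightarrow> r \<le> s \<longrightarrow> local_norm C u p s \<le> local_norm C u p r"
    using local_norm_antimono[OF assms] by blast
  show "Limsup (at_right 0) (\<lambda>r. ereal (local_norm C u p r)) \<le> ereal (norm u)"
    by (rule Limsup_bounded) (simp add: local_norm_le_norm)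
qed

end
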